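(* Let $A$ be a primitive axial algebra of Jordan type $\tfrac12$ and let $a,b$ be distinct $\tfrac12$-axes. Assume $N_{a,b}$ is contained in a $3$-dimensional subalgebra $M$ of $A$ having an identity element $\mathbf e$. Then the following are equivalent: (a) $ab=-\tfrac38\mathbf e+\tfrac12a+\tfrac12b$; (b) $a^{\tau(b)}=b^{\tau(a)}$. If they hold, then $|\tau(a)\tau(b)|=3$; if moreover $\operatorname{char}\mathbb F\ne3$, then $\mathbf e$ is the identity element of $N_{a,b}$ (so $N_{a,b}=M$). Furthermore, if in addition $c:=\mathbf e-b$ is a $\tfrac12$-axis, then $N_{a,c}$ is $3$-dimensional and $ac=-\tfrac18\mathbf e+\tfrac12a+\tfrac12c$; when $\operatorname{char}\mathbb F\ne3$ one has $N_{a,c}=N_{a,b}$, while when $\operatorname{char}\mathbb F=3$ one has $N_{a,b}\subsetneq N_{a,c}$.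
   Context: $\mathbb F$ is a field of characteristic $\neq 2$. For a commutative $\mathbb F$-algebra $A$, $a\in A$, $\lambda\in\mathbb F$, put $A_\lambda(a)=\{x: xa=\lambda x\}$. A $\tfrac12$-axis is an idempotent $a$ with $A=A_1(a)\oplus A_0(a)\oplus A_{1/2}(a)$, $A_1(a)=\mathbb F a$, and with $A_+(a)=A_1(a)\oplus A_0(a)$, $A_-(a)=A_{1/2}(a)$ satisfying $A_+A_+\subseteq A_+$, $A_+A_-\subseteq A_-$, $A_-A_-\subseteq A_+$, $A_0(a)A_0(a)\subseteq A_0(a)$. A primitive axial algebra of Jordan type $\tfrac12$ is a commutative algebra generated by $\tfrac12$-axes. The Miyamoto involution $\tau(a)$ acts as $1$ on $A_+(a)$ and $-1$ on $A_-(a)$. $N_{x,y}$ is the subalgebra generated by $x,y$; an identity element of a subalgebra $N$ is $\mathbf 1\in N$ with $\mathbf 1n=n$ for all $n\in N$. *)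

theory Defs
  imports Complex_Main
begin

definition comm_alg :: "('k::field \<Rightarrow> 'a::ab_group_add \<Rightarrow> 'a) \<Rightarrow> ('a \<Rightarrow> 'a \<Rightarrow> 'a) \<Rightarrow> bool" where
  "comm_alg sc mul \<longleftrightarrow> vector_space sc
     \<and> (\<forall>x y. mul x y = mul y x)
     \<and> (\<forall>x y z. mul (x + y) z = mul x z + mul y z)
     \<and> (\<forall>c x y. mul (sc c x) y = sc c (mul x y))"

definition subalg :: "('k::field \<Rightarrow> 'a::ab_group_add \<Rightarrow> 'a) \<Rightarrow> ('a \<Rightarrow> 'a \<Rightarrow> 'a) \<Rightarrow> 'a set \<Rightarrow> bool" where
  "subalg sc mul S \<longleftrightarrow> module.subspace sc S \<and> (\<forall>x\<in>S. \<forall>y\<in>S. mul x y \<in> S)"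

definition gen_alg :: "('k::field \<Rightarrow> 'a::ab_group_add \<Rightarrow> 'a) \<Rightarrow> ('a \<Rightarrow> 'a \<Rightarrow> 'a) \<Rightarrow> 'a set \<Rightarrow> 'a set" where
  "gen_alg sc mul X = \<Inter> {S. subalg sc mul S \<and> X \<subseteq> S}"

definition Nalg :: "('k::field \<Rightarrow> 'a::ab_group_add \<Rightarrow> 'a) \<Rightarrow> ('a \<Rightarrow> 'a \<Rightarrow> 'a) \<Rightarrow> 'a \<Rightarrow> 'a \<Rightarrow> 'a set" where
  "Nalg sc mul x y = gen_alg sc mul {x, y}"

definition eig :: "('k::field \<Rightarrow> 'a::ab_group_add \<Rightarrow> 'a) \<Rightarrow> ('a \<Rightarrow> 'a \<Rightarrow> 'a) \<Rightarrow> 'a \<Rightarrow> 'k \<Rightarrow> 'a set" where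
  "eig sc mul a l = {x. mul x a = sc l x}"

definition Aplus :: "('k::field \<Rightarrow> 'a::ab_group_add \<Rightarrow> 'a) \<Rightarrow> ('a \<Rightarrow> 'a \<Rightarrow> 'a) \<Rightarrow> 'a \<Rightarrow> 'a set" where
  "Aplus sc mul a = {u + v | u v. u \<in> eig sc mul a 1 \<and> v \<in> eig sc mul a 0}"

definition Aminus :: "('k::field \<Rightarrow> 'a::ab_group_add \<Rightarrow> 'a) \<Rightarrow> ('a \<Rightarrow> 'a \<Rightarrow> 'a) \<Rightarrow> 'a \<Rightarrow> 'a set" where
  "Aminus sc mul a = eig sc mul a (1/2)"

definition half_axis :: "('k::field \<Rightarrow> 'a::ab_group_add \<Rightarrow> 'a) \<Rightarrow> ('a \<Rightarrow> 'a \<Rightarrow> 'a) \<Rightarrow> 'a \<Rightarrow> bool" where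
  "half_axis sc mul a \<longleftrightarrow>
     mul a a = a
   \<and> (\<forall>x. \<exists>!(u, v, w). u \<in> eig sc mul a 1 \<and> v \<in> eig sc mul a 0 \<and> w \<in> eig sc mul a (1/2)
            \<and> x = u + v + w)
   \<and> eig sc mul a 1 = module.span sc {a}
   \<and> (\<forall>x\<in>Aplus sc mul a. \<forall>y\<in>Aplus sc mul a. mul x y \<in> Aplus sc mul a)
   \<and> (\<forall>x\<in>Aplus sc mul a. \<forall>y\<in>Aminus sc mul a. mul x y \<in> Aminus sc mul a)
   \<and> (\<forall>x\<in>Aminus sc mul a. \<forall>y\<in>Aminus sc mul a. mul x y \<in> Aplus sc mul a)
   \<and> (\<forall>x\<in>eig sc mul a 0. \<forall>y\<in>eig sc mul a 0. mul x y \<in> eig sc mul a 0)"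

definition primitive_axial_half :: "('k::field \<Rightarrow> 'a::ab_group_add \<Rightarrow> 'a) \<Rightarrow> ('a \<Rightarrow> 'a \<Rightarrow> 'a) \<Rightarrow> bool" where
  "primitive_axial_half sc mul \<longleftrightarrow> comm_alg sc mul
     \<and> (\<exists>X. (\<forall>x\<in>X. half_axis sc mul x) \<and> gen_alg sc mul X = UNIV)"

definition tau :: "('k::field \<Rightarrow> 'a::ab_group_add \<Rightarrow> 'a) \<Rightarrow> ('a \<Rightarrow> 'a \<Rightarrow> 'a) \<Rightarrow> 'a \<Rightarrow> 'a \<Rightarrow> 'a" where
  "tau sc mul a x = (THE y. \<exists>u v. u \<in> Aplus sc mul a \<and> v \<in> Aminus sc mul a \<and> x = u + v \<and> y = u - v)"

definition is_identity_of :: "('a \<Rightarrow> 'a \<Rightarrow> 'a) \<Rightarrow> 'a set \<Rightarrow> 'a \<Rightarrow> bool" where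
  "is_identity_of mul N e \<longleftrightarrow> e \<in> N \<and> (\<forall>n\<in>N. mul e n = n)"

definition has_order :: "('a \<Rightarrow> 'a) \<Rightarrow> nat \<Rightarrow> bool" where
  "has_order f n \<longleftrightarrow> 0 < n \<and> f ^^ n = id \<and> (\<forall>m. 0 < m \<and> m < n \<longrightarrow> f ^^ m \<noteq> id)"

end

theory Submission
  imports Defs
begin

text \<open>
  Every half-axis a satisfies (ab)a = ab/2 + \<phi> a for some scalar \<phi>, whence
  \<tau>(a) b = b - 4ab + 8\<phi> a. Distinct nonzero idempotents are linearly independent, so
  \<tau>(b) a = \<tau>(a) b holds exactly when \<phi> = 1/8 for both axes. These two relations forbid
  ab to be a multiple of a or of b; hence e \<notin> span {a, b}, the set {e, a, b} is a basis of M,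
  and writing ab in this basis the relations force the coefficients -3/8, 1/2, 1/2.
  The braid relation \<tau>(\<tau>(b) a) = \<tau>(b) \<tau>(a) \<tau>(b) gives (\<tau>(a) \<tau>(b))^3 = 1.
  Finally e = -8/3 (ab - a/2 - b/2) when 3 \<noteq> 0, and e = 8 (a/2 + c/2 - ac) for c = e - b in
  every characteristic, so the subalgebras generated by a, b resp. a, c contain e and hence M;
  in characteristic 3 instead ab = (a + b)/2, and span {a, b} is a subalgebra missing e.
\<close>

lemma (in vector_space) subset_span_if_independent_card_eq_dim:
  assumes BV: "B \<subseteq> V" and iB: "independent B" and fB: "finite B"
    and cB: "card B = dim V" and pos: "0 < card B"
  shows "V \<subseteq> span B"
proof
  fix x assume xV: "x \<in> V"
  show "x \<in> span B"
  proof (rule ccontr)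
    assume "x \<notin> span B"
    then have "independent (insert x B)" and "x \<notin> B"
      using iB by (auto simp: independent_insertI span_base)
    then obtain C where C: "insert x B \<subseteq> C" "C \<subseteq> V" "independent C" "V \<subseteq> span C"
      using maximal_independent_subset_extend[of "insert x B" V] BV xV by auto
    then have "card C = card B"
      using basis_card_eq_dim cB by metis
    moreover have "finite C"
      using pos \<open>card C = card B\<close> card.infinite by fastforce
    ultimately show False
      using card_mono[OF \<open>finite C\<close> C(1)] fB \<open>x \<notin> B\<close> by simp
  qed
qed

lemma has_order_3I:
  assumes f3: "f ^^ 3 = id" and f1: "f \<noteq> id"
  shows "has_order f 3"
proof -
  have f2: "f ^^ 2 \<noteq> id"
  proof
    assume "f ^^ 2 = id"
    then have "f ^^ 3 = f"
      by (simp add: numeral_3_eq_3 numeral_2_eq_2 funpow_Suc_right del: funpow.simps)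
    with f3 f1 show False by simp
  qed
  have "f ^^ m \<noteq> id" if "0 < m" "m < 3" for m :: nat
  proof -
    have "m = 1 \<or> m = 2" using that by auto
    then show ?thesis using f1 f2 by (elim disjE) simp_all
  qed
  then show ?thesis
    using f3 unfolding has_order_def by auto
qed

section \<open>Commutative algebras and generated subalgebras\<close>

locale comm_algebra = vector_space sc for sc :: "'k::field \<Rightarrow> 'a::ab_group_add \<Rightarrow> 'a" +
  fixes mul :: "'a \<Rightarrow> 'a \<Rightarrow> 'a"
  assumes mul_commute: "mul x y = mul y x"
    and mul_add_left: "mul (x + y) z = mul x z + mul y z"
    and mul_scale_left: "mul (sc c x) y = sc c (mul x y)"
begin

lemma mul_add_right: "mul z (x + y) = mul z x + mul z y"
  by (simp add: mul_add_left mul_commute[of z])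

lemma mul_scale_right: "mul y (sc c x) = sc c (mul y x)"
  by (simp add: mul_scale_left mul_commute[of y])

lemma mul_zero_left [simp]: "mul 0 x = 0"
  using mul_scale_left[of 0 x x] by simp

lemma mul_zero_right [simp]: "mul x 0 = 0"
  by (simp add: mul_commute[of x])

lemma mul_minus_left [simp]: "mul (- x) y = - mul x y"
  using mul_add_left[of "- x" x y] by (simp add: eq_neg_iff_add_eq_0)

lemma mul_minus_right [simp]: "mul y (- x) = - mul y x"
  by (simp add: mul_commute[of y])

lemma mul_diff_left: "mul (x - y) z = mul x z - mul y z"
  using mul_add_left[of x "- y" z] by simp

lemma mul_diff_right: "mul z (x - y) = mul z x - mul z y"
  by (simp add: mul_diff_left mul_commute[of z])

lemmas mul_distribs = mul_add_left mul_add_right mul_diff_left mul_diff_right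
  mul_scale_left mul_scale_right

lemma subalg_iff: "subalg sc mul S \<longleftrightarrow> subspace S \<and> (\<forall>x\<in>S. \<forall>y\<in>S. mul x y \<in> S)"
  by (simp add: subalg_def)

lemma subalg_Nalg: "subalg sc mul (Nalg sc mul x y)"
  unfolding subalg_iff subspace_def Nalg_def gen_alg_def by auto

lemma Nalg_least: "subalg sc mul S \<Longrightarrow> x \<in> S \<Longrightarrow> y \<in> S \<Longrightarrow> Nalg sc mul x y \<subseteq> S"
  by (auto simp: Nalg_def gen_alg_def)

lemma generators_in_Nalg: "x \<in> Nalg sc mul x y" "y \<in> Nalg sc mul x y"
  by (auto simp: Nalg_def gen_alg_def)

lemma subspace_Nalg: "subspace (Nalg sc mul x y)"
  using subalg_Nalg by (simp add: subalg_iff)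

lemma mul_mem_Nalg: "u \<in> Nalg sc mul x y \<Longrightarrow> v \<in> Nalg sc mul x y \<Longrightarrow> mul u v \<in> Nalg sc mul x y"
  using subalg_Nalg by (simp add: subalg_iff)

lemma span_subset_Nalg: "X \<subseteq> Nalg sc mul x y \<Longrightarrow> span X \<subseteq> Nalg sc mul x y"
  using subspace_Nalg by (rule span_minimal[rotated])

lemma span_product_subset_Nalg: "span {x, y, mul x y} \<subseteq> Nalg sc mul x y"
  using generators_in_Nalg mul_mem_Nalg by (intro span_subset_Nalg) auto

text \<open>The Miyamoto involution as the polynomial 1 - 8L + 8L^2 in the multiplication L by a,
  which is 1 at the eigenvalues 0, 1 and -1 at 1/2.\<close>

definition miyamoto :: "'a \<Rightarrow> 'a \<Rightarrow> 'a" where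
  "miyamoto a x = x - sc 8 (mul x a) + sc 8 (mul (mul x a) a)"

lemma miyamoto_add: "miyamoto a (x + y) = miyamoto a x + miyamoto a y"
  by (simp add: miyamoto_def mul_add_left scale_right_distrib algebra_simps)

lemma miyamoto_diff: "miyamoto a (x - y) = miyamoto a x - miyamoto a y"
  by (simp add: miyamoto_def mul_diff_left scale_right_diff_distrib algebra_simps)

lemma miyamoto_scale: "miyamoto a (sc c x) = sc c (miyamoto a x)"
  by (simp add: miyamoto_def mul_scale_left scale_right_diff_distrib scale_right_distrib mult.commute)

lemma miyamoto_zero_axis [simp]: "miyamoto 0 x = x"
  by (simp add: miyamoto_def)

lemma miyamoto_axis_zero [simp]: "miyamoto a 0 = 0"
  by (simp add: miyamoto_def)

lemma miyamoto_self: "mul a a = a \<Longrightarrow> miyamoto a a = a"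
  by (simp add: miyamoto_def)

lemma miyamoto_Aplus: "p \<in> Aplus sc mul a \<Longrightarrow> miyamoto a p = p"
  by (auto simp: Aplus_def eig_def miyamoto_def mul_add_left)

lemma half_axis_idempotent: "half_axis sc mul a \<Longrightarrow> mul a a = a"
  by (simp add: half_axis_def)

lemma half_axis_fusion:
  assumes "half_axis sc mul a"
  shows "\<forall>x\<in>Aplus sc mul a. \<forall>y\<in>Aplus sc mul a. mul x y \<in> Aplus sc mul a"
    and "\<forall>x\<in>Aplus sc mul a. \<forall>y\<in>Aminus sc mul a. mul x y \<in> Aminus sc mul a"
    and "\<forall>x\<in>Aminus sc mul a. \<forall>y\<in>Aminus sc mul a. mul x y \<in> Aplus sc mul a"
  using assms unfolding half_axis_def by simp_all

lemma half_axis_eigen_decomp: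
  assumes "half_axis sc mul a"
  obtains u v w where "u \<in> eig sc mul a 1" "v \<in> eig sc mul a 0" "w \<in> eig sc mul a (1/2)"
    "x = u + v + w"
proof -
  have "\<forall>x. \<exists>!(u, v, w). u \<in> eig sc mul a 1 \<and> v \<in> eig sc mul a 0
      \<and> w \<in> eig sc mul a (1/2) \<and> x = u + v + w"
    using assms unfolding half_axis_def by (elim conjE) assumption
  then obtain t where "case t of (u, v, w) \<Rightarrow> u \<in> eig sc mul a 1 \<and> v \<in> eig sc mul a 0
      \<and> w \<in> eig sc mul a (1/2) \<and> x = u + v + w"
    by (blast dest: ex1_implies_ex)
  then show thesis by (cases t) (auto intro: that)
qed

lemma half_axis_plus_minus:
  assumes "half_axis sc mul a"
  obtains p q where "p \<in> Aplus sc mul a" "q \<in> Aminus sc mul a" "x = p + q"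
proof -
  obtain u v w where "u \<in> eig sc mul a 1" "v \<in> eig sc mul a 0" "w \<in> eig sc mul a (1/2)"
    "x = u + v + w"
    using half_axis_eigen_decomp[OF assms] .
  then show thesis
    by (intro that[of "u + v" w]) (auto simp: Aplus_def Aminus_def)
qed

lemma half_axis_decomp:
  assumes "half_axis sc mul a"
  obtains k v w where "mul v a = 0" "mul w a = sc (1/2) w" "x = sc k a + v + w"
proof -
  obtain u v w where "u \<in> eig sc mul a 1" "v \<in> eig sc mul a 0" "w \<in> eig sc mul a (1/2)"
    "x = u + v + w"
    using half_axis_eigen_decomp[OF assms] .
  moreover have "eig sc mul a 1 = span {a}"
    using assms by (simp add: half_axis_def)
  ultimately obtain k where "u = sc k a"
    by (auto simp: span_singleton)
  with that[of v w k] show thesis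
    using \<open>v \<in> eig sc mul a 0\<close> \<open>w \<in> eig sc mul a (1/2)\<close> \<open>x = u + v + w\<close>
    by (simp add: eig_def)
qed

lemma span_pair: "x \<in> span {a, b} \<longleftrightarrow> (\<exists>p q. x = sc p a + sc q b)"
  by (auto simp: span_insert span_singleton diff_eq_eq add.commute)

lemma idempotents_scale_eq:
  assumes aa: "mul a a = a" and bb: "mul b b = b" and a0: "a \<noteq> 0" and b0: "b \<noteq> 0"
    and ab: "a \<noteq> b" and eq: "sc p a = sc q b"
  shows "p = 0 \<and> q = 0"
proof -
  have "q = 0"
  proof (rule ccontr)
    assume q: "q \<noteq> 0"
    define k where "k = p / q"
    have bk: "b = sc k a"
      using arg_cong[OF eq, of "sc (inverse q)"] q by (simp add: k_def divide_inverse mult.commute)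
    then have "sc (k * k) a = sc k a"
      using bb by (simp add: mul_scale_left mul_scale_right aa)
    then have "k * k = k" using a0 by simp
    moreover have "k \<noteq> 0" using b0 bk by auto
    ultimately have "k = 1" by simp
    then show False using ab bk by simp
  qed
  then show ?thesis using eq a0 by simp
qed

lemma subalg_span_pair:
  assumes "mul a a = a" "mul b b = b" "mul a b \<in> span {a, b}"
  shows "subalg sc mul (span {a, b})"
  unfolding subalg_iff
proof (intro conjI ballI)
  fix x y assume "x \<in> span {a, b}" "y \<in> span {a, b}"
  then obtain p q p' q' where "x = sc p a + sc q b" "y = sc p' a + sc q' b"
    by (auto simp: span_pair)
  then have "mul x y = sc (p * p') a + sc (p * q' + q * p') (mul a b) + sc (q * q') b"
    using assms by (simp add: mul_distribs mul_commute[of b a] scale_right_distrib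
        scale_left_distrib algebra_simps)
  then show "mul x y \<in> span {a, b}"
    using assms by (simp add: span_add span_scale span_base)
qed simp

text \<open>The case \<phi> = 1/8 of the relation (ab)a = ab/2 + \<phi> a satisfied by every half-axis a
  (lemma half_axis_mul_mul).\<close>

abbreviation phi_eighth :: "'a \<Rightarrow> 'a \<Rightarrow> bool" where
  "phi_eighth a b \<equiv> mul (mul a b) a = sc (1/2) (mul a b) + sc (1/8) a"

end

locale comm_algebra_char_ne_2 = comm_algebra sc mul
  for sc :: "'k::field \<Rightarrow> 'a::ab_group_add \<Rightarrow> 'a" and mul +
  assumes two_neq_zero: "(2::'k) \<noteq> 0"
begin

lemma two_power_neq_zero: "(4::'k) \<noteq> 0" "(8::'k) \<noteq> 0" "(16::'k) \<noteq> 0"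
proof -
  have "(2::'k) ^ n \<noteq> 0" for n using two_neq_zero by simp
  from this[of 2] this[of 3] this[of 4] show "(4::'k) \<noteq> 0" "(8::'k) \<noteq> 0" "(16::'k) \<noteq> 0"
    by simp_all
qed

lemma miyamoto_Aminus: "q \<in> Aminus sc mul a \<Longrightarrow> miyamoto a q = - q"
proof -
  assume "q \<in> Aminus sc mul a"
  then have "mul q a = sc (1/2) q" by (simp add: Aminus_def eig_def)
  then have "miyamoto a q = q - sc 8 (sc (1/2) q) + sc 8 (sc (1/2) (sc (1/2) q))"
    by (simp add: miyamoto_def mul_scale_left)
  also have "\<dots> = sc (1 - 8 * (1/2) + 8 * (1/2 * (1/2))) q"
    by (simp add: scale_left_distrib scale_left_diff_distrib)
  also have "1 - 8 * (1/2) + 8 * (1/2 * (1/2)) = (-1::'k)"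
    using two_neq_zero by (simp add: field_simps)
  finally show ?thesis by simp
qed

lemma miyamoto_plus_minus:
  "p \<in> Aplus sc mul a \<Longrightarrow> q \<in> Aminus sc mul a \<Longrightarrow> miyamoto a (p + q) = p - q"
  by (simp add: miyamoto_add miyamoto_Aplus miyamoto_Aminus)

lemma tau_eq_miyamoto:
  assumes "half_axis sc mul a"
  shows "tau sc mul a = miyamoto a"
proof
  fix x
  show "tau sc mul a x = miyamoto a x"
    unfolding tau_def
  proof (rule the_equality)
    obtain p q where "p \<in> Aplus sc mul a" "q \<in> Aminus sc mul a" "x = p + q"
      using half_axis_plus_minus[OF assms] .
    then show "\<exists>u v. u \<in> Aplus sc mul a \<and> v \<in> Aminus sc mul a \<and> x = u + v
        \<and> miyamoto a x = u - v"
      by (auto simp: miyamoto_plus_minus)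
  qed (auto simp: miyamoto_plus_minus)
qed

lemma miyamoto_involution:
  assumes "half_axis sc mul a"
  shows "miyamoto a (miyamoto a x) = x"
proof -
  obtain p q where "p \<in> Aplus sc mul a" "q \<in> Aminus sc mul a" "x = p + q"
    using half_axis_plus_minus[OF assms] .
  then show ?thesis by (simp add: miyamoto_plus_minus miyamoto_diff miyamoto_Aplus miyamoto_Aminus)
qed

lemma miyamoto_mul:
  assumes ha: "half_axis sc mul a"
  shows "miyamoto a (mul x y) = mul (miyamoto a x) (miyamoto a y)"
proof -
  obtain p q where pq: "p \<in> Aplus sc mul a" "q \<in> Aminus sc mul a" "x = p + q"
    using half_axis_plus_minus[OF ha] .
  obtain p' q' where pq': "p' \<in> Aplus sc mul a" "q' \<in> Aminus sc mul a" "y = p' + q'"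
    using half_axis_plus_minus[OF ha] .
  have "mul p p' \<in> Aplus sc mul a" "mul q q' \<in> Aplus sc mul a"
    "mul p q' \<in> Aminus sc mul a" "mul p' q \<in> Aminus sc mul a"
    using half_axis_fusion[OF ha] pq pq' by blast+
  then have "miyamoto a (mul x y) = mul p p' + mul q q' - mul p q' - mul q p'"
    by (simp add: pq pq' mul_add_left mul_add_right miyamoto_add miyamoto_Aplus miyamoto_Aminus
        mul_commute[of q p'])
  also have "\<dots> = mul (p - q) (p' - q')"
    by (simp add: mul_diff_left mul_diff_right)
  also have "p - q = miyamoto a x" using pq by (simp add: miyamoto_plus_minus)
  also have "p' - q' = miyamoto a y" using pq' by (simp add: miyamoto_plus_minus)
  finally show ?thesis .
qed

lemma miyamoto_miyamoto:
  assumes "half_axis sc mul b"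
  shows "miyamoto (miyamoto b c) x = miyamoto b (miyamoto c (miyamoto b x))"
proof -
  have "miyamoto b (miyamoto c (miyamoto b x)) = miyamoto b (miyamoto b x)
      - sc 8 (miyamoto b (mul (miyamoto b x) c))
      + sc 8 (miyamoto b (mul (mul (miyamoto b x) c) c))"
    by (simp add: miyamoto_def[of c] miyamoto_add miyamoto_diff miyamoto_scale)
  also have "\<dots> = miyamoto (miyamoto b c) x"
    by (simp add: miyamoto_def[of "miyamoto b c"] miyamoto_mul[OF assms] miyamoto_involution[OF assms])
  finally show ?thesis by simp
qed

section \<open>Pairs of half-axes\<close>

lemma half_axis_mul_mul:
  assumes ha: "half_axis sc mul a"
  obtains l where "mul (mul a b) a = sc (1/2) (mul a b) + sc l a"
proof -
  obtain k v w where v: "mul v a = 0" and w: "mul w a = sc (1/2) w" and b: "b = sc k a + v + w"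
    using half_axis_decomp[OF ha] .
  note aa = half_axis_idempotent[OF ha]
  have ab: "mul a b = sc k a + sc (1/2) w"
    unfolding mul_commute[of a b] by (simp add: b mul_add_left mul_scale_left aa v w)
  have "mul (mul a b) a = sc k a + sc (1/2) (sc (1/2) w)"
    unfolding ab by (simp add: mul_add_left mul_scale_left aa w)
  also have "sc k a = sc (k/2) a + sc (k/2) a"
    using two_neq_zero by (simp flip: scale_left_distrib)
  finally have "mul (mul a b) a = sc (1/2) (mul a b) + sc (k/2) a"
    unfolding ab by (simp add: scale_right_distrib add.commute add.left_commute)
  then show thesis by (rule that)
qed

lemma miyamoto_axis:
  assumes "mul (mul a b) a = sc (1/2) (mul a b) + sc l a"
  shows "miyamoto a b = b - sc 4 (mul a b) + sc (8 * l) a"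
proof -
  have "miyamoto a b = b - sc 8 (mul a b) + sc (8 * (1/2)) (mul a b) + sc (8 * l) a"
    by (simp add: miyamoto_def mul_commute[of b a] assms scale_right_distrib)
  also have "sc 8 (mul a b) = sc 4 (mul a b) + sc 4 (mul a b)"
    by (simp flip: scale_left_distrib)
  also have "(8::'k) * (1/2) = 4"
    using two_neq_zero by simp
  finally show ?thesis by simp
qed

lemma phi_eighth_pair_nonzero:
  assumes "phi_eighth a b" "phi_eighth b a" "a \<noteq> b"
  shows "a \<noteq> 0" "b \<noteq> 0"
  using assms two_power_neq_zero by auto

lemma miyamoto_swap_iff:
  assumes ha: "half_axis sc mul a" and hb: "half_axis sc mul b" and ab: "a \<noteq> b"
  shows "miyamoto b a = miyamoto a b \<longleftrightarrow> phi_eighth a b \<and> phi_eighth b a"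
proof -
  obtain l where l: "mul (mul a b) a = sc (1/2) (mul a b) + sc l a"
    using half_axis_mul_mul[OF ha] .
  obtain m where m: "mul (mul b a) b = sc (1/2) (mul b a) + sc m b"
    using half_axis_mul_mul[OF hb] .
  note aa = half_axis_idempotent[OF ha] and bb = half_axis_idempotent[OF hb]
  have swap_iff: "miyamoto b a = miyamoto a b \<longleftrightarrow> sc (8 * l - 1) a = sc (8 * m - 1) b"
    by (auto simp: miyamoto_axis[OF l] miyamoto_axis[OF m] mul_commute[of b a] algebra_simps)
  have eighth_iff: "\<And>t::'k. 8 * t - 1 = 0 \<longleftrightarrow> t = 1/8"
    by (auto simp: field_simps two_power_neq_zero)
  show ?thesis
  proof
    assume swap: "miyamoto b a = miyamoto a b"
    have "a \<noteq> 0" "b \<noteq> 0" using swap ab by auto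
    then have "8 * l - 1 = 0 \<and> 8 * m - 1 = 0"
      using idempotents_scale_eq[OF aa bb _ _ ab] swap swap_iff by blast
    then show "phi_eighth a b \<and> phi_eighth b a"
      using l m eighth_iff by simp
  next
    assume phi: "phi_eighth a b \<and> phi_eighth b a"
    then have "a \<noteq> 0" "b \<noteq> 0" using ab phi_eighth_pair_nonzero by blast+
    then have "l = 1/8" "m = 1/8" using phi l m by simp_all
    then have "8 * l - 1 = 0" "8 * m - 1 = 0" using eighth_iff by blast+
    then show "miyamoto b a = miyamoto a b" using swap_iff by simp
  qed
qed

lemma mul_neq_scale_if_phi_eighth:
  assumes aa: "mul a a = a" and bb: "mul b b = b" and a0: "a \<noteq> 0" and b0: "b \<noteq> 0"
    and ab: "a \<noteq> b" and phi: "phi_eighth b a"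
  shows "mul a b \<noteq> sc s a"
proof
  assume "mul a b = sc s a"
  then have "sc (s * s) a = sc (1/2) (sc s a) + sc (1/8) b"
    using phi by (simp add: mul_commute[of b a] mul_scale_left aa)
  then have "sc (s * s - s / 2) a = sc (1/8) b"
    by (simp add: algebra_simps)
  then have "(1/8::'k) = 0" using idempotents_scale_eq[OF aa bb a0 b0 ab] by blast
  then show False using two_power_neq_zero by simp
qed

lemma identity_not_in_span:
  assumes aa: "mul a a = a" and bb: "mul b b = b" and ab: "a \<noteq> b"
    and ea: "mul e a = a" and eb: "mul e b = b"
    and phi_ab: "phi_eighth a b" and phi_ba: "phi_eighth b a"
  shows "e \<notin> span {a, b}"
proof
  note a0 = phi_eighth_pair_nonzero(1)[OF phi_ab phi_ba ab]
    and b0 = phi_eighth_pair_nonzero(2)[OF phi_ab phi_ba ab]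
  assume "e \<in> span {a, b}"
  then obtain p q where e: "e = sc p a + sc q b"
    by (auto simp: span_pair)
  have Ea: "sc q (mul a b) = sc (1 - p) a"
    using ea by (simp add: e mul_distribs aa mul_commute[of b a] algebra_simps)
  have Eb: "sc p (mul a b) = sc (1 - q) b"
    using eb by (simp add: e mul_distribs bb algebra_simps)
  show False
  proof (cases "q = 0")
    case True
    then have "p = 1" using Ea a0 by simp
    then have "mul b a = sc 1 b" using Eb True by (simp add: mul_commute[of b a])
    then show False
      using mul_neq_scale_if_phi_eighth[OF bb aa b0 a0 ab[symmetric] phi_ab] by blast
  next
    case False
    then have "mul a b = sc ((1 - p) / q) a"
      using arg_cong[OF Ea, of "sc (inverse q)"] by (simp add: divide_inverse mult.commute)
    then show False
      using mul_neq_scale_if_phi_eighth[OF aa bb a0 b0 ab phi_ba] by blast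
  qed
qed

lemma coeff_eq_if_phi_eighth:
  assumes aa: "mul a a = a" and bb: "mul b b = b" and a0: "a \<noteq> 0" and b0: "b \<noteq> 0"
    and ab: "a \<noteq> b" and ea: "mul e a = a"
    and phi_ab: "phi_eighth a b" and phi_ba: "phi_eighth b a"
    and prod: "mul a b = sc \<alpha> e + sc \<beta> a + sc \<gamma> b"
  shows "\<gamma> = 1/2 \<and> \<alpha> + \<beta> = 1/8"
proof -
  have "mul (mul a b) a = sc (\<alpha> + \<beta>) a + sc \<gamma> (mul a b)"
    by (subst (1) prod) (simp add: mul_distribs ea aa mul_commute[of b a] scale_left_distrib)
  with phi_ab have "sc (1/2) (mul a b) + sc (1/8) a = sc (\<alpha> + \<beta>) a + sc \<gamma> (mul a b)"
    by (rule trans[OF sym])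
  then have "sc \<gamma> (mul a b) - sc (1/2) (mul a b) = sc (1/8) a - sc (\<alpha> + \<beta>) a"
    by (simp only: diff_eq_eq diff_add_eq eq_diff_eq) (metis add.commute)
  then have eq: "sc (\<gamma> - 1/2) (mul a b) = sc (1/8 - (\<alpha> + \<beta>)) a"
    by (simp only: scale_left_diff_distrib)
  have \<gamma>: "\<gamma> = 1/2"
  proof (rule ccontr)
    assume "\<gamma> \<noteq> 1/2"
    then have "mul a b = sc (inverse (\<gamma> - 1/2)) (sc (\<gamma> - 1/2) (mul a b))"
      by simp
    also have "\<dots> = sc (inverse (\<gamma> - 1/2) * (1/8 - (\<alpha> + \<beta>))) a"
      by (simp add: eq)
    finally show False using mul_neq_scale_if_phi_eighth[OF aa bb a0 b0 ab phi_ba] by blast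
  qed
  from eq have "sc (1/8 - (\<alpha> + \<beta>)) a = 0" unfolding \<gamma> by simp
  then have "1/8 - (\<alpha> + \<beta>) = 0" using a0 by simp
  then show ?thesis using \<gamma> eq_iff_diff_eq_0 by metis
qed

lemma product_eq_if_in_span:
  assumes aa: "mul a a = a" and bb: "mul b b = b" and ab: "a \<noteq> b"
    and ea: "mul e a = a" and eb: "mul e b = b"
    and phi_ab: "phi_eighth a b" and phi_ba: "phi_eighth b a"
    and span: "mul a b \<in> span {e, a, b}"
  shows "mul a b = sc (- (3/8)) e + sc (1/2) a + sc (1/2) b"
proof -
  note a0 = phi_eighth_pair_nonzero(1)[OF phi_ab phi_ba ab]
    and b0 = phi_eighth_pair_nonzero(2)[OF phi_ab phi_ba ab]
  obtain \<alpha> where "mul a b - sc \<alpha> e \<in> span {a, b}"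
    using span by (auto simp: span_insert[of e])
  then obtain \<beta> \<gamma> where "mul a b - sc \<alpha> e = sc \<beta> a + sc \<gamma> b"
    by (auto simp: span_pair)
  then have prod: "mul a b = sc \<alpha> e + sc \<beta> a + sc \<gamma> b"
    by (simp add: diff_eq_eq algebra_simps)
  then have prod': "mul b a = sc \<alpha> e + sc \<gamma> b + sc \<beta> a"
    by (simp add: mul_commute[of b a] algebra_simps)
  have "\<gamma> = 1/2 \<and> \<alpha> + \<beta> = 1/8"
    by (rule coeff_eq_if_phi_eighth[OF aa bb a0 b0 ab ea phi_ab phi_ba prod])
  moreover have "\<beta> = 1/2 \<and> \<alpha> + \<gamma> = 1/8"
    by (rule coeff_eq_if_phi_eighth[OF bb aa b0 a0 ab[symmetric] eb phi_ba phi_ab prod'])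
  ultimately have \<alpha>: "\<alpha> = 1/8 - 1/2" and \<beta>: "\<beta> = 1/2" and \<gamma>: "\<gamma> = 1/2"
    by (auto simp: eq_diff_eq)
  have "1/8 - 1/2 = - (3/8::'k)"
    by (simp add: field_simps two_neq_zero two_power_neq_zero)
  with prod show ?thesis unfolding \<alpha> \<beta> \<gamma> by simp
qed

lemma phi_eighth_if_product:
  assumes aa: "mul a a = a" and ea: "mul e a = a"
    and prod: "mul a b = sc (- (3/8)) e + sc (1/2) a + sc (1/2) b"
  shows "phi_eighth a b"
proof -
  have "mul (mul a b) a = sc (1/2) (mul a b) + (sc (- (3/8)) a + sc (1/2) a)"
    by (subst (1) prod) (simp add: mul_distribs ea aa mul_commute[of b a] algebra_simps)
  also have "sc (- (3/8)) a + sc (1/2) a = sc (- (3/8) + 1/2) a"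
    by (simp only: scale_left_distrib)
  also have "- (3/8) + 1/2 = (1/8::'k)"
    by (simp add: field_simps two_neq_zero two_power_neq_zero)
  finally show ?thesis .
qed

lemma miyamoto_swap_order_3:
  assumes ha: "half_axis sc mul a" and hb: "half_axis sc mul b" and ab: "a \<noteq> b"
    and swap: "miyamoto b a = miyamoto a b"
  shows "has_order (miyamoto a \<circ> miyamoto b) 3"
proof (rule has_order_3I)
  note inv_a = miyamoto_involution[OF ha] and inv_b = miyamoto_involution[OF hb]
  have braid: "miyamoto b (miyamoto a (miyamoto b x)) = miyamoto a (miyamoto b (miyamoto a x))" for x
    using miyamoto_miyamoto[OF hb, of a x] miyamoto_miyamoto[OF ha, of b x] swap by simp
  show "(miyamoto a \<circ> miyamoto b) ^^ 3 = id"
  proof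
    fix x
    have "((miyamoto a \<circ> miyamoto b) ^^ 3) x
        = miyamoto a (miyamoto b (miyamoto a (miyamoto b (miyamoto a (miyamoto b x)))))"
      by (simp add: numeral_3_eq_3)
    also have "miyamoto a (miyamoto b (miyamoto a (miyamoto b x))) = miyamoto b (miyamoto a x)"
      using braid[of "miyamoto b x"] inv_b by simp
    also have "miyamoto a (miyamoto b (miyamoto b (miyamoto a x))) = x"
      using inv_a inv_b by simp
    finally show "((miyamoto a \<circ> miyamoto b) ^^ 3) x = id x"
      unfolding id_apply .
  qed
  show "miyamoto a \<circ> miyamoto b \<noteq> id"
  proof
    assume "miyamoto a \<circ> miyamoto b = id"
    then have "miyamoto b x = miyamoto a x" for x
      using inv_a by (metis comp_apply id_apply)
    then have "miyamoto a b = b" "miyamoto b a = a"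
      using miyamoto_self half_axis_idempotent ha hb by metis+
    with swap ab show False by simp
  qed
qed

end

lemma comm_algebra_if_primitive_axial_half:
  "primitive_axial_half sc mul \<Longrightarrow> comm_algebra sc mul"
  unfolding primitive_axial_half_def comm_alg_def comm_algebra_def comm_algebra_axioms_def
  by blast

section \<open>Two half-axes in a 3-dimensional unital subalgebra\<close>

locale axes_in_unital_subalgebra = comm_algebra_char_ne_2 sc mul
  for sc :: "'k::field \<Rightarrow> 'a::ab_group_add \<Rightarrow> 'a" and mul +
  fixes a b e :: 'a and M :: "'a set"
  assumes half_axis_a: "half_axis sc mul a" and half_axis_b: "half_axis sc mul b"
    and a_neq_b: "a \<noteq> b"
    and subalg_M: "subalg sc mul M" and dim_M: "dim M = 3"
    and Nalg_subset_M: "Nalg sc mul a b \<subseteq> M"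
    and identity_e: "is_identity_of mul M e"
begin

lemma axes_idempotent: "mul a a = a" "mul b b = b"
  using half_axis_idempotent half_axis_a half_axis_b by blast+

lemma mem_M: "a \<in> M" "b \<in> M" "e \<in> M"
  using Nalg_subset_M generators_in_Nalg identity_e by (auto simp: is_identity_of_def)

lemma identity_mul: "mul e a = a" "mul e b = b"
  using identity_e mem_M by (simp_all add: is_identity_of_def)

lemma M_subset_span:
  assumes phi_ab: "phi_eighth a b" and phi_ba: "phi_eighth b a"
  shows "M \<subseteq> span {e, a, b}"
proof -
  note a0 = phi_eighth_pair_nonzero(1)[OF assms a_neq_b]
    and b0 = phi_eighth_pair_nonzero(2)[OF assms a_neq_b]
  have e: "e \<notin> span {a, b}"
    using identity_not_in_span[OF axes_idempotent a_neq_b identity_mul assms] .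
  have "a \<notin> span {b}"
  proof
    assume "a \<in> span {b}"
    then obtain k where "sc 1 a = sc k b" by (auto simp: span_singleton)
    then show False
      using idempotents_scale_eq[OF axes_idempotent a0 b0 a_neq_b, of 1 k] by simp
  qed
  then have "independent {e, a, b}"
    using e b0 by (simp add: independent_insert span_base)
  moreover have "e \<notin> {a, b}"
    using e span_base by blast
  then have "card {e, a, b} = 3"
    using a_neq_b by simp
  ultimately show ?thesis
    using subset_span_if_independent_card_eq_dim[of "{e, a, b}" M] mem_M dim_M by simp
qed

lemma product_iff_swap:
  "mul a b = sc (- (3/8)) e + sc (1/2) a + sc (1/2) b \<longleftrightarrow> miyamoto b a = miyamoto a b"
proof
  assume prod: "mul a b = sc (- (3/8)) e + sc (1/2) a + sc (1/2) b"
  then have "mul b a = sc (- (3/8)) e + sc (1/2) b + sc (1/2) a"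
    by (simp add: mul_commute[of b a] algebra_simps)
  with prod show "miyamoto b a = miyamoto a b"
    using phi_eighth_if_product axes_idempotent identity_mul
      miyamoto_swap_iff[OF half_axis_a half_axis_b a_neq_b] by blast
next
  assume "miyamoto b a = miyamoto a b"
  then have phi: "phi_eighth a b" "phi_eighth b a"
    using miyamoto_swap_iff[OF half_axis_a half_axis_b a_neq_b] by blast+
  have "mul a b \<in> span {e, a, b}"
    using M_subset_span[OF phi] subalg_M mem_M by (auto simp: subalg_iff)
  then show "mul a b = sc (- (3/8)) e + sc (1/2) a + sc (1/2) b"
    using product_eq_if_in_span[OF axes_idempotent a_neq_b identity_mul phi] by blast
qed

context
  assumes prod: "mul a b = sc (- (3/8)) e + sc (1/2) a + sc (1/2) b"
begin

lemma phi_eighth_pair: "phi_eighth a b" "phi_eighth b a"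
  using product_iff_swap prod miyamoto_swap_iff[OF half_axis_a half_axis_b a_neq_b] by blast+

lemma M_subset_Nalg_if_identity_mem:
  assumes "e \<in> Nalg sc mul x y" "a \<in> Nalg sc mul x y" "b \<in> Nalg sc mul x y"
  shows "M \<subseteq> Nalg sc mul x y"
  using M_subset_span[OF phi_eighth_pair] span_subset_Nalg[of "{e, a, b}"] assms by blast

lemma Nalg_eq_M:
  assumes three: "(3::'k) \<noteq> 0"
  shows "Nalg sc mul a b = M"
proof
  have "sc (inverse (3/8)) (sc (1/2) a + sc (1/2) b - mul a b) = sc (inverse (3/8)) (sc (3/8) e)"
    by (simp add: prod)
  also have "(3/8::'k) \<noteq> 0"
    using three two_power_neq_zero by simp
  then have "sc (inverse (3/8)) (sc (3/8) e) = e"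
    by (metis scale_scale scale_one field_class.field_inverse)
  finally have "e \<in> span {a, b, mul a b}"
    by (metis span_base span_diff span_add span_scale insertCI)
  then show "M \<subseteq> Nalg sc mul a b"
    using M_subset_Nalg_if_identity_mem generators_in_Nalg span_product_subset_Nalg by blast
qed (rule Nalg_subset_M)

lemma product_complement:
  "mul a (e - b) = sc (- (1/8)) e + sc (1/2) a + sc (1/2) (e - b)"
proof -
  have "mul a (e - b) = a - mul a b"
    using identity_mul by (simp add: mul_diff_right mul_commute[of a e])
  also have "\<dots> = sc (3/8) e + sc (1/2) a - sc (1/2) b"
    using two_neq_zero by (simp add: prod algebra_simps flip: scale_left_distrib)
  also have "sc (3/8) e = sc (- (1/8)) e + sc (1/2) e"
    using two_neq_zero two_power_neq_zero by (simp add: field_simps flip: scale_left_distrib)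
  finally show ?thesis by (simp add: scale_right_diff_distrib algebra_simps)
qed

lemma Nalg_complement_eq_M: "Nalg sc mul a (e - b) = M"
proof
  show "Nalg sc mul a (e - b) \<subseteq> M"
    using subalg_M mem_M by (intro Nalg_least) (auto simp: subalg_iff subspace_diff)
  have "sc 8 (sc (1/2) a + sc (1/2) (e - b) - mul a (e - b)) = sc (8 * (1/8)) e"
    by (simp add: product_complement)
  also have "\<dots> = e"
    using two_power_neq_zero by simp
  finally have "e \<in> span {a, e - b, mul a (e - b)}"
    by (metis span_base span_diff span_add span_scale insertCI)
  then have e: "e \<in> Nalg sc mul a (e - b)"
    using span_product_subset_Nalg by blast
  then have "e - (e - b) \<in> Nalg sc mul a (e - b)"
    using generators_in_Nalg subspace_Nalg by (blast intro: subspace_diff)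
  then show "M \<subseteq> Nalg sc mul a (e - b)"
    using e M_subset_Nalg_if_identity_mem generators_in_Nalg by simp
qed

lemma Nalg_psubset_char_3:
  assumes three: "(3::'k) = 0"
  shows "Nalg sc mul a b \<subset> Nalg sc mul a (e - b)"
proof -
  have "mul a b = sc (1/2) a + sc (1/2) b"
    using prod three by simp
  then have "mul a b \<in> span {a, b}"
    by (simp add: span_add span_scale span_base)
  then have "Nalg sc mul a b \<subseteq> span {a, b}"
    using subalg_span_pair[OF axes_idempotent] by (intro Nalg_least) (auto simp: span_base)
  moreover have "e \<notin> span {a, b}"
    using identity_not_in_span[OF axes_idempotent a_neq_b identity_mul phi_eighth_pair] .
  ultimately show ?thesis
    using Nalg_subset_M Nalg_complement_eq_M mem_M by blast
qed

end

end

theorem lemma3p20: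
  fixes sc :: "'k::field \<Rightarrow> 'a::ab_group_add \<Rightarrow> 'a"
    and mul :: "'a \<Rightarrow> 'a \<Rightarrow> 'a"
    and a b e :: 'a and M :: "'a set"
  assumes char2: "(2::'k) \<noteq> 0"
    and A: "primitive_axial_half sc mul"
    and ha: "half_axis sc mul a" and hb: "half_axis sc mul b" and ab: "a \<noteq> b"
    and M: "subalg sc mul M" and dimM: "vector_space.dim sc M = 3"
    and NM: "Nalg sc mul a b \<subseteq> M"
    and e: "is_identity_of mul M e"
  shows "(mul a b = sc (- (3/8)) e + sc (1/2) a + sc (1/2) b
            \<longleftrightarrow> tau sc mul b a = tau sc mul a b)
       \<and> (mul a b = sc (- (3/8)) e + sc (1/2) a + sc (1/2) b \<longrightarrow>
            has_order (tau sc mul a \<circ> tau sc mul b) 3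
          \<and> ((3::'k) \<noteq> 0 \<longrightarrow> is_identity_of mul (Nalg sc mul a b) e \<and> Nalg sc mul a b = M)
          \<and> (half_axis sc mul (e - b) \<longrightarrow>
                vector_space.dim sc (Nalg sc mul a (e - b)) = 3
              \<and> mul a (e - b) = sc (- (1/8)) e + sc (1/2) a + sc (1/2) (e - b)
              \<and> ((3::'k) \<noteq> 0 \<longrightarrow> Nalg sc mul a (e - b) = Nalg sc mul a b)
              \<and> ((3::'k) = 0 \<longrightarrow> Nalg sc mul a b \<subset> Nalg sc mul a (e - b))))"
proof -
  interpret comm_algebra sc mul
    using A by (rule comm_algebra_if_primitive_axial_half)
  interpret axes_in_unital_subalgebra sc mul a b e M
    using char2 ha hb ab M dimM NM e by unfold_locales
  have tau: "tau sc mul a = miyamoto a" "tau sc mul b = miyamoto b"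
    using tau_eq_miyamoto ha hb by blast+
  show ?thesis
    unfolding tau
    using product_iff_swap miyamoto_swap_order_3[OF ha hb ab] Nalg_eq_M identity_e
      product_complement Nalg_complement_eq_M Nalg_psubset_char_3 dim_M
    by auto
qed

end
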